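(* Let $\alpha>0$ and $F(t)=(1+t^{-\alpha})^{-1}$ for $t>0$, $F(0)=0$. A function $G\in\Delta_+$ is in the Boolean max-domain of attraction of $F$ if and only if the function $t\mapsto 1-\exp\big(1-G(t)^{-1}\big)$ is regularly varying of exponent $-\alpha$.
   Context: $\Delta_+$ is the set of functions $F:[0,\infty)\to[0,1]$ that are nondecreasing, right continuous and satisfy $\lim_{t\to\infty}F(t)=1$. Define $\sqcap$ on $[0,1]$ by $(x\sqcap y)^{-1}-1=(x^{-1}-1)+(y^{-1}-1)$ (conventions $0^{-1}=+\infty$, $(+\infty)^{-1}=0$, and $\exp(1-0^{-1})=0$), and the Boolean max-convolution of $F,G\in\Delta_+$ by $(F\boxed{\vee}G)(t)=F(t)\sqcap G(t)$; $G^{\boxed{\vee}n}$ denotes the $n$-fold Boolean max-convolution of $G$ with itself. $G\in\Delta_+$ is in the Boolean max-domain of attraction of $F\in\Delta_+$ if there exist $a_n>0$ ($n\in\mathbb{N}$) with $G^{\boxed{\vee}n}(a_nt)\to F(t)$ as $n\to\infty$ for all $t\ge0$. A function $h$ on $[0,\infty)$ is regularly varying of exponent $-\alpha$ if $\lim_{t\to+\infty}h(tx)/h(t)=x^{-\alpha}$ for all $x>0$. *)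

theory Defs
  imports Complex_Main
begin

definition Delta_plus :: "(real \<Rightarrow> real) \<Rightarrow> bool" where
  "Delta_plus F \<longleftrightarrow>
     mono_on {0..} F \<and>
     (\<forall>t\<ge>0. 0 \<le> F t \<and> F t \<le> 1) \<and>
     (\<forall>t\<ge>0. continuous (at_right t) F) \<and>
     (F \<longlongrightarrow> 1) at_top"

text \<open>Boolean max operation on [0,1]: (x \<sqinter> y)^-1 - 1 = (x^-1 - 1) + (y^-1 - 1),
  with 0^-1 = +\<infinity>, (+\<infinity>)^-1 = 0.\<close>
definition bmax :: "real \<Rightarrow> real \<Rightarrow> real" where
  "bmax x y = (if x = 0 \<or> y = 0 then 0 else 1 / (1 / x + 1 / y - 1))"

definition bmax_conv :: "(real \<Rightarrow> real) \<Rightarrow> (real \<Rightarrow> real) \<Rightarrow> (real \<Rightarrow> real)" where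
  "bmax_conv F G = (\<lambda>t. bmax (F t) (G t))"

text \<open>n-fold Boolean max-convolution power (n = 0 gives the neutral function 1;
  only n \<ge> 1 matters).\<close>
fun bmax_pow :: "nat \<Rightarrow> (real \<Rightarrow> real) \<Rightarrow> (real \<Rightarrow> real)" where
  "bmax_pow 0 G = (\<lambda>_. 1)"
| "bmax_pow (Suc 0) G = G"
| "bmax_pow (Suc (Suc n)) G = bmax_conv (bmax_pow (Suc n) G) G"

definition bool_max_domain_of_attraction :: "(real \<Rightarrow> real) \<Rightarrow> (real \<Rightarrow> real) \<Rightarrow> bool" where
  "bool_max_domain_of_attraction G F \<longleftrightarrow>
     (\<exists>a :: nat \<Rightarrow> real. (\<forall>n. a n > 0) \<and>
        (\<forall>t\<ge>0. (\<lambda>n. bmax_pow n G (a n * t)) \<longlonglongrightarrow> F t))"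

definition regularly_varying :: "real \<Rightarrow> (real \<Rightarrow> real) \<Rightarrow> bool" where
  "regularly_varying \<rho> h \<longleftrightarrow>
     (\<forall>x>0. ((\<lambda>t. h (t * x) / h t) \<longlongrightarrow> x powr \<rho>) at_top)"

text \<open>1 - exp(1 - y^-1) with the conventions 0^-1 = +\<infinity>, exp(1 - 0^-1) = 0.\<close>
definition one_minus_exp_inv :: "real \<Rightarrow> real" where
  "one_minus_exp_inv y = (if y = 0 then 1 else 1 - exp (1 - 1 / y))"

end

theory Submission
  imports Defs "HOL-Real_Asymp.Real_Asymp"
begin

(* Writing odds y = 1 / y - 1, the Boolean max operation becomes addition of odds, so the
   n-fold Boolean max-convolution power of G equals 1 / (1 + n odds G), and convergence of
   these powers at a_n t to F t = 1 / (1 + t powr -\<alpha>) means that n odds (G (a_n t)) tends to t powr -\<alpha>.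
   The function q = odds \<circ> G is eventually positive, nonincreasing and tends to 0; for such q a
   scaling sequence with n q (a_n t) tending to t powr -\<alpha> exists iff q is regularly varying of index -\<alpha>
   (take for a_n the point where q crosses the level 1/n; conversely, sandwich s between
   consecutive a_n). Finally 1 - exp (1 - 1 / G) = 1 - exp (- q) is asymptotically equivalent
   to q. If G attains the value 1, both sides of the equivalence fail. *)

lemma tendsto_sandwich_family:
  fixes f :: "'a \<Rightarrow> 'b::linorder_topology"
  assumes "P \<noteq> bot" "Q \<noteq> bot"
    and upper: "\<forall>\<^sub>F x in P. (\<forall>\<^sub>F n in F. f n \<le> u x n) \<and> (u x \<longlongrightarrow> U x) F" "(U \<longlongrightarrow> L) P"
    and lower: "\<forall>\<^sub>F y in Q. (\<forall>\<^sub>F n in F. l y n \<le> f n) \<and> (l y \<longlongrightarrow> V y) F" "(V \<longlongrightarrow> L) Q"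
  shows "(f \<longlongrightarrow> L) F"
proof (rule order_tendstoI)
  fix b assume "L < b"
  from eventually_happens'[OF \<open>P \<noteq> bot\<close> eventually_conj[OF upper(1) order_tendstoD(2)[OF upper(2) this]]]
  obtain x where "\<forall>\<^sub>F n in F. f n \<le> u x n" "\<forall>\<^sub>F n in F. u x n < b"
    using order_tendstoD(2) by blast
  then show "\<forall>\<^sub>F n in F. f n < b" by eventually_elim (rule le_less_trans)
next
  fix b assume "b < L"
  from eventually_happens'[OF \<open>Q \<noteq> bot\<close> eventually_conj[OF lower(1) order_tendstoD(1)[OF lower(2) this]]]
  obtain y where "\<forall>\<^sub>F n in F. l y n \<le> f n" "\<forall>\<^sub>F n in F. b < l y n"
    using order_tendstoD(1) by blast
  then show "\<forall>\<^sub>F n in F. b < f n" by eventually_elim (rule less_le_trans)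
qed

lemma filterlim_times_const_at_top: "0 < x \<Longrightarrow> filterlim (\<lambda>t::real. t * x) at_top at_top"
  using filterlim_tendsto_pos_mult_at_top[OF tendsto_const _ filterlim_ident, of x] by (simp add: mult.commute)

lemma eventually_ge_times_filterlim_at_top:
  fixes a :: "'a \<Rightarrow> real"
  assumes "filterlim a at_top F" "0 < t"
  shows "\<forall>\<^sub>F n in F. c \<le> a n * t"
  using filterlim_compose[OF filterlim_times_const_at_top[OF assms(2)] assms(1)]
  unfolding filterlim_at_top by blast

lemma tendsto_shifted_quotient:
  fixes f g :: "nat \<Rightarrow> real"
  assumes f: "(\<lambda>n. real n * f n) \<longlonglongrightarrow> A" and g: "(\<lambda>n. real n * g n) \<longlonglongrightarrow> B" and "B \<noteq> 0"
  shows "(\<lambda>n. f (Suc n) / g n) \<longlonglongrightarrow> A / B" and "(\<lambda>n. f n / g (Suc n)) \<longlonglongrightarrow> A / B"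
proof -
  have ne: "\<forall>\<^sub>F n in sequentially. real n * g n \<noteq> 0"
    using tendsto_imp_eventually_ne[OF g \<open>B \<noteq> 0\<close>] .
  have "(\<lambda>n. real (Suc n) * f (Suc n) / (real n * g n) * (real n / real (Suc n))) \<longlonglongrightarrow> A / B * 1"
    using \<open>B \<noteq> 0\<close> by (intro tendsto_intros LIMSEQ_Suc[OF f] g LIMSEQ_n_over_Suc_n)
  moreover have "\<forall>\<^sub>F n in sequentially.
      real (Suc n) * f (Suc n) / (real n * g n) * (real n / real (Suc n)) = f (Suc n) / g n"
    using ne by eventually_elim (simp add: field_simps del: of_nat_Suc)
  ultimately show "(\<lambda>n. f (Suc n) / g n) \<longlonglongrightarrow> A / B" by (simp add: Lim_transform_eventually)
  have "(\<lambda>n. real n * f n / (real (Suc n) * g (Suc n)) * (real (Suc n) / real n)) \<longlonglongrightarrow> A / B * 1"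
    using \<open>B \<noteq> 0\<close> by (intro tendsto_intros f LIMSEQ_Suc[OF g] LIMSEQ_Suc_n_over_n)
  moreover have "\<forall>\<^sub>F n in sequentially.
      real n * f n / (real (Suc n) * g (Suc n)) * (real (Suc n) / real n) = f n / g (Suc n)"
    using ne[THEN eventually_sequentially_Suc[THEN iffD2]] eventually_gt_at_top[of 0]
    by eventually_elim (simp add: field_simps del: of_nat_Suc)
  ultimately show "(\<lambda>n. f n / g (Suc n)) \<longlonglongrightarrow> A / B" by (simp add: Lim_transform_eventually)
qed

lemma eventually_between_consecutive_terms:
  fixes a :: "nat \<Rightarrow> real"
  assumes alim: "filterlim a at_top sequentially"
  obtains m :: "real \<Rightarrow> nat" where "filterlim m at_top at_top"
    "\<forall>\<^sub>F s in at_top. a (m s) \<le> s \<and> s < a (Suc (m s))"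
proof
  define m where "m s = (LEAST n. s < a (Suc n))" for s
  have "\<exists>n. s < a (Suc n)" for s
  proof -
    obtain N where "\<And>n. N \<le> n \<Longrightarrow> s < a n"
      using alim unfolding filterlim_at_top_dense eventually_sequentially by blast
    then show ?thesis by (meson le_SucI order_refl)
  qed
  then have upper: "s < a (Suc (m s))" for s unfolding m_def by (rule LeastI_ex)
  have lower: "a (Suc k) \<le> s" if "k < m s" for k s
    using not_less_Least[OF that[unfolded m_def]] by simp
  show "filterlim m at_top at_top"
    unfolding filterlim_at_top
  proof
    fix N
    show "\<forall>\<^sub>F s in at_top. N \<le> m s"
      using eventually_ge_at_top[of "Max (a ` {..N})"]
    proof eventually_elim
      case (elim s)
      show ?case
      proof (rule ccontr)
        assume "\<not> N \<le> m s"
        then have "a (Suc (m s)) \<le> Max (a ` {..N})" by (intro Max_ge) auto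
        with elim upper[of s] show False by linarith
      qed
    qed
  qed
  show "\<forall>\<^sub>F s in at_top. a (m s) \<le> s \<and> s < a (Suc (m s))"
    using eventually_ge_at_top[of "a 0"]
  proof eventually_elim
    case (elim s)
    then show ?case using upper[of s] lower[of "m s - 1" s] by (cases "m s") auto
  qed
qed

lemma tendsto_one_div_one_plus_iff:
  fixes f :: "'a \<Rightarrow> real"
  assumes "1 + c \<noteq> 0"
  shows "((\<lambda>x. 1 / (1 + f x)) \<longlongrightarrow> 1 / (1 + c)) F \<longleftrightarrow> (f \<longlongrightarrow> c) F"
proof
  assume "((\<lambda>x. 1 / (1 + f x)) \<longlongrightarrow> 1 / (1 + c)) F"
  from tendsto_diff[OF tendsto_divide[OF tendsto_const this] tendsto_const, of 1 1]
  have "((\<lambda>x. 1 / (1 / (1 + f x)) - 1) \<longlongrightarrow> 1 / (1 / (1 + c)) - 1) F"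
    using assms by simp
  then show "(f \<longlongrightarrow> c) F" by simp
next
  assume "(f \<longlongrightarrow> c) F"
  then show "((\<lambda>x. 1 / (1 + f x)) \<longlongrightarrow> 1 / (1 + c)) F"
    using assms by (intro tendsto_intros) auto
qed

section \<open>Regular variation of monotone functions\<close>

lemma regularly_varying_asymp_equiv:
  assumes "h \<sim>[at_top] q"
  shows "regularly_varying \<rho> h \<longleftrightarrow> regularly_varying \<rho> q"
proof -
  have "(\<lambda>t. h (t * x) / h t) \<sim>[at_top] (\<lambda>t. q (t * x) / q t)" if "0 < x" for x
    using that by (intro asymp_equiv_divide asymp_equiv_compose'[OF assms] assms filterlim_times_const_at_top)
  then show ?thesis
    unfolding regularly_varying_def
    by (blast intro: asymp_equiv_tendsto_transfer asymp_equiv_symI)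
qed

lemma regularly_varying_quotient_tendsto:
  assumes "regularly_varying \<rho> q" "\<forall>\<^sub>F s in at_top. q s \<noteq> 0" "filterlim a at_top F"
    and "0 < t" "0 < x"
  shows "((\<lambda>n. q (a n * t) / q (a n * x)) \<longlongrightarrow> t powr \<rho> / x powr \<rho>) F"
proof -
  have lim: "((\<lambda>n. q (a n * y) / q (a n)) \<longlongrightarrow> y powr \<rho>) F" if "0 < y" for y
    using filterlim_compose[OF _ assms(3)] assms(1) that unfolding regularly_varying_def by blast
  have "((\<lambda>n. (q (a n * t) / q (a n)) / (q (a n * x) / q (a n))) \<longlongrightarrow> t powr \<rho> / x powr \<rho>) F"
    using assms(5) by (intro tendsto_divide lim assms(4,5)) simp
  moreover have "\<forall>\<^sub>F n in F. (q (a n * t) / q (a n)) / (q (a n * x) / q (a n)) = q (a n * t) / q (a n * x)"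
    using eventually_compose_filterlim[OF assms(2,3)] by eventually_elim simp
  ultimately show ?thesis by (rule Lim_transform_eventually)
qed

lemma antimono_level_crossing:
  fixes q :: "real \<Rightarrow> real"
  assumes mono: "antimono_on {t0..} q" and lim: "(q \<longlongrightarrow> 0) at_top" and "0 < c"
  shows "\<exists>a. t0 \<le> a \<and> (\<forall>y. t0 \<le> y \<and> y < a \<longrightarrow> c < q y) \<and> (\<forall>z. a < z \<longrightarrow> q z \<le> c)"
proof -
  define S where "S = {s. t0 \<le> s \<and> q s \<le> c}"
  obtain N where N: "\<And>s. N \<le> s \<Longrightarrow> q s < c"
    using order_tendstoD(2)[OF lim \<open>0 < c\<close>] unfolding eventually_at_top_linorder by blast
  have "max N t0 \<in> S" using N[of "max N t0"] by (simp add: S_def)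
  then have S: "S \<noteq> {}" by blast
  have bdd: "bdd_below S" unfolding S_def by (rule bdd_belowI[of _ t0]) simp
  have "t0 \<le> Inf S" using S by (rule cInf_greatest) (simp add: S_def)
  moreover have "c < q y" if "t0 \<le> y" "y < Inf S" for y
  proof (rule ccontr)
    assume "\<not> c < q y"
    with that have "y \<in> S" by (simp add: S_def)
    then show False using cInf_lower[OF _ bdd, of y] that(2) by linarith
  qed
  moreover have "q z \<le> c" if "Inf S < z" for z
  proof -
    from that obtain s where s: "s \<in> S" "s < z" unfolding cInf_less_iff[OF S bdd] ..
    then have "q z \<le> q s" using monotone_onD[OF mono, of s z] by (simp add: S_def)
    with s show ?thesis by (simp add: S_def)
  qed
  ultimately show ?thesis by blast
qed

lemma antimono_level_crossing_sequence:
  fixes q :: "real \<Rightarrow> real"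
  assumes mono: "antimono_on {t0..} q" and pos: "\<forall>s\<ge>t0. 0 < q s"
    and lim: "(q \<longlongrightarrow> 0) at_top"
  obtains a where "\<And>n. t0 \<le> a n" "filterlim a at_top sequentially"
    "\<And>n y. 0 < n \<Longrightarrow> t0 \<le> y \<Longrightarrow> y < a n \<Longrightarrow> 1 / real n < q y"
    "\<And>n z. 0 < n \<Longrightarrow> a n < z \<Longrightarrow> q z \<le> 1 / real n"
proof -
  have "\<exists>b. t0 \<le> b \<and> (0 < n \<longrightarrow> (\<forall>y. t0 \<le> y \<and> y < b \<longrightarrow> 1 / real n < q y) \<and>
                                 (\<forall>z. b < z \<longrightarrow> q z \<le> 1 / real n))" for n :: nat
  proof (cases "n = 0")
    case False
    then have "0 < 1 / real n" by simp
    with False show ?thesis using antimono_level_crossing[OF mono lim] by blast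
  qed auto
  then obtain a where a: "\<And>n. t0 \<le> a n \<and> (0 < n \<longrightarrow> (\<forall>y. t0 \<le> y \<and> y < a n \<longrightarrow> 1 / real n < q y) \<and>
                                 (\<forall>z. a n < z \<longrightarrow> q z \<le> 1 / real n))"
    by metis
  have above: "q z \<le> 1 / real n" if "0 < n" "a n < z" for n z using a[of n] that by blast
  have "filterlim a at_top sequentially"
    unfolding filterlim_at_top
  proof
    fix Z
    define M where "M = max Z t0"
    have "0 < q M" using pos by (simp add: M_def)
    then have "\<forall>\<^sub>F n in sequentially. 1 / real n < q M"
      by (rule order_tendstoD(2)[OF lim_1_over_n])
    then show "\<forall>\<^sub>F n in sequentially. Z \<le> a n"
      using eventually_gt_at_top[of 0]
    proof eventually_elim
      case (elim n)
      then have "\<not> a n < M" using above[of n M] by auto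
      then show ?case by (simp add: M_def)
    qed
  qed
  moreover have "1 / real n < q y" if "0 < n" "t0 \<le> y" "y < a n" for n y using a[of n] that by blast
  ultimately show ?thesis using that a above by blast
qed

(* With a n the level-1/n crossing of q, n q (a n x) \<le> 1 < n q (a n y) for y < 1 < x, so
   n q (a n t) lies between q (a n t) / q (a n y) and q (a n t) / q (a n x); by regular variation
   these tend to (t/y) powr \<rho> and (t/x) powr \<rho>, and letting x, y \<rightarrow> 1 squeezes the limit. *)
lemma scaling_sequence_if_regularly_varying:
  fixes q :: "real \<Rightarrow> real"
  assumes mono: "antimono_on {t0..} q" and pos: "\<forall>s\<ge>t0. 0 < q s" and "0 < t0"
    and lim: "(q \<longlongrightarrow> 0) at_top" and rv: "regularly_varying \<rho> q"
  obtains a where "\<forall>n. 0 < a n" "filterlim a at_top sequentially"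
    "\<forall>t>0. (\<lambda>n. real n * q (a n * t)) \<longlonglongrightarrow> t powr \<rho>"
proof -
  obtain a where a: "\<And>n. t0 \<le> a n" and alim: "filterlim a at_top sequentially"
    and below: "\<And>n y. 0 < n \<Longrightarrow> t0 \<le> y \<Longrightarrow> y < a n \<Longrightarrow> 1 / real n < q y"
    and above: "\<And>n z. 0 < n \<Longrightarrow> a n < z \<Longrightarrow> q z \<le> 1 / real n"
    using antimono_level_crossing_sequence[OF mono pos lim] by blast
  have apos: "0 < a n" for n using a[of n] \<open>0 < t0\<close> by linarith
  have qne: "\<forall>\<^sub>F s in at_top. q s \<noteq> 0"
    using eventually_ge_at_top[of t0] by eventually_elim (use pos in auto)
  have upper: "real n * q (a n * t) \<le> q (a n * t) / q (a n * x)"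
    if "0 < n" "1 < x" "t0 \<le> a n * t" for n x t
  proof -
    have "t0 \<le> a n * x" using a[of n] apos[of n] \<open>1 < x\<close> by (smt (verit) mult_le_cancel_left1)
    then have "0 < q (a n * x)" "real n * q (a n * x) \<le> 1" "0 \<le> q (a n * t)"
      using pos that above[of n "a n * x"] apos[of n] by (auto simp: field_simps less_imp_le)
    then show ?thesis
      using mult_left_le[of "real n * q (a n * x)" "q (a n * t)"] by (simp add: le_divide_eq ac_simps)
  qed
  have lower: "q (a n * t) / q (a n * y) \<le> real n * q (a n * t)"
    if "0 < n" "0 < y" "y < 1" "t0 \<le> a n * y" "t0 \<le> a n * t" for n y t
  proof -
    have "1 \<le> real n * q (a n * y)" "0 < q (a n * y)" "0 \<le> q (a n * t)"
      using pos that below[of n "a n * y"] apos[of n] by (auto simp: field_simps less_imp_le)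
    then show ?thesis
      using mult_left_mono[of 1 "real n * q (a n * y)" "q (a n * t)"] by (simp add: divide_le_eq ac_simps)
  qed
  have "(\<lambda>n. real n * q (a n * t)) \<longlonglongrightarrow> t powr \<rho>" if "0 < t" for t
  proof (rule tendsto_sandwich_family[where P = "at_right 1" and Q = "at_left 1"])
    show "((\<lambda>x. t powr \<rho> / x powr \<rho>) \<longlongrightarrow> t powr \<rho>) (at_right 1)"
      "((\<lambda>x. t powr \<rho> / x powr \<rho>) \<longlongrightarrow> t powr \<rho>) (at_left 1)"
      by (auto intro!: tendsto_eq_intros)
    show "\<forall>\<^sub>F x in at_right 1. (\<forall>\<^sub>F n in sequentially. real n * q (a n * t) \<le> q (a n * t) / q (a n * x))
        \<and> ((\<lambda>n. q (a n * t) / q (a n * x)) \<longlonglongrightarrow> t powr \<rho> / x powr \<rho>)"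
      using eventually_at_right_less
    proof eventually_elim
      case (elim x)
      have "\<forall>\<^sub>F n in sequentially. real n * q (a n * t) \<le> q (a n * t) / q (a n * x)"
        using eventually_ge_times_filterlim_at_top[OF alim \<open>0 < t\<close>, of t0] eventually_gt_at_top[of 0]
        by eventually_elim (use upper elim in blast)
      then show ?case using regularly_varying_quotient_tendsto[OF rv qne alim \<open>0 < t\<close>] elim by simp
    qed
    show "\<forall>\<^sub>F y in at_left 1. (\<forall>\<^sub>F n in sequentially. q (a n * t) / q (a n * y) \<le> real n * q (a n * t))
        \<and> ((\<lambda>n. q (a n * t) / q (a n * y)) \<longlonglongrightarrow> t powr \<rho> / y powr \<rho>)"
      using eventually_at_left_real[OF zero_less_one]
    proof eventually_elim
      case (elim y)
      then have y: "0 < y" "y < 1" by auto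
      have "\<forall>\<^sub>F n in sequentially. q (a n * t) / q (a n * y) \<le> real n * q (a n * t)"
        using eventually_ge_times_filterlim_at_top[OF alim \<open>0 < t\<close>, of t0]
          eventually_ge_times_filterlim_at_top[OF alim \<open>0 < y\<close>, of t0] eventually_gt_at_top[of 0]
        by eventually_elim (use lower y in blast)
      then show ?case using regularly_varying_quotient_tendsto[OF rv qne alim \<open>0 < t\<close> y(1)] by simp
    qed
  qed simp_all
  with apos alim show ?thesis using that by blast
qed

lemma antimono_quotient_bounds:
  fixes q :: "real \<Rightarrow> real"
  assumes mono: "antimono_on {t0..} q" and pos: "\<forall>s\<ge>t0. 0 < q s"
    and "t0 \<le> b" "b \<le> s" "s \<le> c" "0 < x" "t0 \<le> b * x"
  shows "q (c * x) / q b \<le> q (s * x) / q s" and "q (s * x) / q s \<le> q (b * x) / q c"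
proof -
  have sx: "t0 \<le> s * x" "s * x \<le> c * x" "b * x \<le> s * x"
    using assms(3-7) mult_right_mono[of b s x] mult_right_mono[of s c x] by linarith+
  have le: "q (c * x) \<le> q (s * x)" "q (s * x) \<le> q (b * x)" "q s \<le> q b" "q c \<le> q s"
    using monotone_onD[OF mono, of "s * x" "c * x"] monotone_onD[OF mono, of "b * x" "s * x"]
      monotone_onD[OF mono, of b s] monotone_onD[OF mono, of s c] sx assms(3-7) by auto
  have "0 < q (s * x)" "0 < q (b * x)" "0 < q s" "0 < q c"
    using pos assms(3-7) \<open>t0 \<le> s * x\<close> by auto
  with le show "q (c * x) / q b \<le> q (s * x) / q s" "q (s * x) / q s \<le> q (b * x) / q c"
    by (auto intro!: frac_le)
qed

(* For a m \<le> s < a (Suc m), monotonicity traps q (s x) / q s between quotients of consecutive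
   terms of the scaling sequence, which both converge to x powr \<rho>. *)
lemma regularly_varying_if_scaling_sequence:
  fixes q :: "real \<Rightarrow> real"
  assumes mono: "antimono_on {t0..} q" and pos: "\<forall>s\<ge>t0. 0 < q s"
    and alim: "filterlim a at_top sequentially"
    and scaling: "\<forall>t>0. (\<lambda>n. real n * q (a n * t)) \<longlonglongrightarrow> t powr \<rho>"
  shows "regularly_varying \<rho> q"
  unfolding regularly_varying_def
proof (intro allI impI)
  fix x :: real
  assume "0 < x"
  obtain m where mlim: "filterlim m at_top at_top"
    and between: "\<forall>\<^sub>F s in at_top. a (m s) \<le> s \<and> s < a (Suc (m s))"
    using eventually_between_consecutive_terms[OF alim] by blast
  have "(\<lambda>n. real n * q (a n * x)) \<longlonglongrightarrow> x powr \<rho>" "(\<lambda>n. real n * q (a n)) \<longlonglongrightarrow> 1"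
    using scaling \<open>0 < x\<close> spec[OF scaling, of 1] by auto
  note shifted = tendsto_shifted_quotient[OF this, simplified]
  have "\<forall>\<^sub>F n in sequentially. t0 \<le> a n * 1 \<and> t0 \<le> a n * x"
    using eventually_ge_times_filterlim_at_top[OF alim zero_less_one]
      eventually_ge_times_filterlim_at_top[OF alim \<open>0 < x\<close>] by (rule eventually_conj)
  from eventually_compose_filterlim[OF this mlim] between
  have "\<forall>\<^sub>F s in at_top. q (a (Suc (m s)) * x) / q (a (m s)) \<le> q (s * x) / q s \<and>
                            q (s * x) / q s \<le> q (a (m s) * x) / q (a (Suc (m s)))"
    by eventually_elim (use antimono_quotient_bounds[OF mono pos] \<open>0 < x\<close> in auto)
  then show "((\<lambda>s. q (s * x) / q s) \<longlongrightarrow> x powr \<rho>) at_top"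
    by (intro tendsto_sandwich[OF _ _ filterlim_compose[OF shifted(1) mlim]
          filterlim_compose[OF shifted(2) mlim]]) (auto elim: eventually_mono)
qed

section \<open>Odds and the Boolean max-convolution\<close>

definition odds :: "real \<Rightarrow> real" where
  "odds y = 1 / y - 1"

(* The next two identities hold without side conditions because 1 / 0 = 0. *)
lemma one_div_one_plus_odds [simp]: "1 / (1 + odds y) = y"
  by (simp add: odds_def)

lemma odds_one_div_one_plus [simp]: "odds (1 / (1 + s)) = s"
  by (simp add: odds_def)

lemma odds_pos_iff: "0 < y \<Longrightarrow> 0 < odds y \<longleftrightarrow> y < 1"
  by (simp add: odds_def field_simps)

lemma odds_nonneg: "0 < y \<Longrightarrow> y \<le> 1 \<Longrightarrow> 0 \<le> odds y"
  by (simp add: odds_def field_simps)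

lemma odds_antimono: "0 < x \<Longrightarrow> x \<le> y \<Longrightarrow> odds y \<le> odds x"
  by (simp add: odds_def frac_le)

lemma tendsto_odds_0 [tendsto_intros]: "(g \<longlongrightarrow> 1) F \<Longrightarrow> ((\<lambda>x. odds (g x)) \<longlongrightarrow> 0) F"
  unfolding odds_def by (auto intro!: tendsto_eq_intros)

lemma bmax_eq_odds: "x \<noteq> 0 \<Longrightarrow> y \<noteq> 0 \<Longrightarrow> bmax x y = 1 / (1 + (odds x + odds y))"
  by (simp add: bmax_def odds_def)

lemma bmax_odds:
  assumes "0 < x" "x \<le> 1" "0 < y" "y \<le> 1"
  shows "0 < bmax x y" "bmax x y \<le> 1" "odds (bmax x y) = odds x + odds y"
  using odds_nonneg[of x] odds_nonneg[of y] assms by (simp_all add: bmax_eq_odds)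

lemma bmax_pow_zero: "G t = 0 \<Longrightarrow> bmax_pow (Suc n) G t = 0"
  by (induction n) (simp_all add: bmax_conv_def bmax_def)

lemma bmax_pow_odds:
  assumes "0 < G t" "G t \<le> 1"
  shows "0 < bmax_pow (Suc n) G t \<and> bmax_pow (Suc n) G t \<le> 1 \<and>
         odds (bmax_pow (Suc n) G t) = real (Suc n) * odds (G t)"
proof (induction n)
  case (Suc n)
  then show ?case
    using bmax_odds[of "bmax_pow (Suc n) G t" "G t"] assms by (simp add: bmax_conv_def algebra_simps)
qed (use assms in simp)

lemma bmax_pow_eq_odds:
  assumes "0 < n" "0 < G t" "G t \<le> 1"
  shows "bmax_pow n G t = 1 / (1 + real n * odds (G t))"
proof -
  obtain m where "n = Suc m" using assms(1) gr0_conv_Suc by blast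
  then have "odds (bmax_pow n G t) = real n * odds (G t)"
    using bmax_pow_odds[of G t m] assms by simp
  then show ?thesis by (metis one_div_one_plus_odds)
qed

lemma tendsto_bmax_pow_iff:
  assumes "\<forall>\<^sub>F n in sequentially. 0 < G (x n) \<and> G (x n) \<le> 1" and "0 \<le> c"
  shows "(\<lambda>n. bmax_pow n G (x n)) \<longlonglongrightarrow> 1 / (1 + c) \<longleftrightarrow>
         (\<lambda>n. real n * odds (G (x n))) \<longlonglongrightarrow> c"
proof -
  have "\<forall>\<^sub>F n in sequentially. bmax_pow n G (x n) = 1 / (1 + real n * odds (G (x n)))"
    using assms(1) eventually_gt_at_top[of 0] by eventually_elim (simp add: bmax_pow_eq_odds)
  then have "(\<lambda>n. bmax_pow n G (x n)) \<longlonglongrightarrow> 1 / (1 + c) \<longleftrightarrow>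
             (\<lambda>n. 1 / (1 + real n * odds (G (x n)))) \<longlonglongrightarrow> 1 / (1 + c)"
    by (rule tendsto_cong)
  also have "\<dots> \<longleftrightarrow> (\<lambda>n. real n * odds (G (x n))) \<longlonglongrightarrow> c"
    using assms(2) by (intro tendsto_one_div_one_plus_iff) simp
  finally show ?thesis .
qed

lemma scaling_limit_if_bmax_pow_tendsto:
  assumes "\<forall>n. 0 \<le> G (x n) \<and> G (x n) \<le> 1" and lim: "(\<lambda>n. bmax_pow n G (x n)) \<longlonglongrightarrow> 1 / (1 + c)"
    and "0 < c"
  shows "(\<lambda>n. real n * odds (G (x n))) \<longlonglongrightarrow> c"
    and "\<forall>\<^sub>F n in sequentially. G (x n) < 1"
proof -
  have "\<forall>\<^sub>F n in sequentially. 0 < bmax_pow n G (x n)"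
    using order_tendstoD(1)[OF lim] \<open>0 < c\<close> by simp
  then have pos: "\<forall>\<^sub>F n in sequentially. 0 < G (x n) \<and> G (x n) \<le> 1"
    using eventually_gt_at_top[of 0]
    by eventually_elim (metis assms(1) bmax_pow_zero gr0_conv_Suc less_irrefl order.order_iff_strict)
  then show scaling: "(\<lambda>n. real n * odds (G (x n))) \<longlonglongrightarrow> c"
    using lim tendsto_bmax_pow_iff[of G x c] \<open>0 < c\<close> by simp
  from order_tendstoD(1)[OF scaling \<open>0 < c\<close>] pos
  show "\<forall>\<^sub>F n in sequentially. G (x n) < 1"
    by eventually_elim (auto simp: zero_less_mult_iff odds_pos_iff)
qed

lemma bmax_pow_tendsto_0:
  assumes "0 \<le> G t" "G t < 1"
  shows "(\<lambda>n. bmax_pow n G t) \<longlonglongrightarrow> 0"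
proof (cases "G t = 0")
  case True
  have "\<forall>\<^sub>F n in sequentially. bmax_pow n G t = 0"
    using eventually_gt_at_top[of 0] by eventually_elim (metis True bmax_pow_zero gr0_conv_Suc)
  then show ?thesis by (rule tendsto_eventually)
next
  case False
  then have "0 < odds (G t)" using assms by (simp add: odds_pos_iff)
  then have "(\<lambda>n. 1 / (1 + real n * odds (G t))) \<longlonglongrightarrow> 0" by real_asymp
  moreover have "\<forall>\<^sub>F n in sequentially. bmax_pow n G t = 1 / (1 + real n * odds (G t))"
    using eventually_gt_at_top[of 0] by eventually_elim (use assms False in \<open>simp add: bmax_pow_eq_odds\<close>)
  ultimately show ?thesis by (simp add: tendsto_cong)
qed

lemma one_minus_exp_inv_asymp_equiv_odds:
  assumes "(g \<longlongrightarrow> 1) F"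
  shows "(\<lambda>x. one_minus_exp_inv (g x)) \<sim>[F] (\<lambda>x. odds (g x))"
proof -
  have "(\<lambda>u::real. 1 - exp (- u)) \<sim>[nhds 0] (\<lambda>u. u)"
    unfolding asymp_equiv_nhds_iff by (simp, real_asymp)
  then have "(\<lambda>x. 1 - exp (- odds (g x))) \<sim>[F] (\<lambda>x. odds (g x))"
    by (rule asymp_equiv_compose') (rule tendsto_odds_0[OF assms])
  moreover have "\<forall>\<^sub>F x in F. one_minus_exp_inv (g x) = 1 - exp (- odds (g x))"
    using tendsto_imp_eventually_ne[OF assms one_neq_zero]
    by eventually_elim (simp add: one_minus_exp_inv_def odds_def)
  ultimately show ?thesis
    by (subst asymp_equiv_cong) auto
qed

section \<open>Boolean max-domain of attraction\<close>

lemma Delta_plusD: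
  assumes "Delta_plus G"
  shows "mono_on {0..} G" "(G \<longlongrightarrow> 1) at_top"
    and "0 \<le> t \<Longrightarrow> 0 \<le> G t" "0 \<le> t \<Longrightarrow> G t \<le> 1" "0 \<le> t \<Longrightarrow> continuous (at_right t) G"
  using assms by (auto simp: Delta_plus_def)

lemma Delta_plus_odds:
  assumes "Delta_plus G" "\<forall>t\<ge>0. G t < 1"
  obtains t0 where "0 < t0" "\<forall>t\<ge>t0. 0 < G t" "antimono_on {t0..} (\<lambda>t. odds (G t))"
    "\<forall>t\<ge>t0. 0 < odds (G t)" "((\<lambda>t. odds (G t)) \<longlongrightarrow> 0) at_top"
proof -
  obtain t1 where t1: "\<And>t. t1 \<le> t \<Longrightarrow> 0 < G t"
    using order_tendstoD(1)[OF Delta_plusD(2)[OF assms(1)], of 0]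
    unfolding eventually_at_top_linorder by auto
  define t0 where "t0 = max 1 t1"
  have Gpos: "\<forall>t\<ge>t0. 0 < G t" using t1 by (simp add: t0_def)
  show ?thesis
  proof (rule that[of t0])
    show "0 < t0" by (simp add: t0_def)
    show "antimono_on {t0..} (\<lambda>t. odds (G t))"
      using Gpos by (intro monotone_onI odds_antimono monotone_onD[OF Delta_plusD(1)[OF assms(1)]])
        (auto simp: t0_def)
    show "\<forall>t\<ge>t0. 0 < odds (G t)" using Gpos assms(2) by (simp add: odds_pos_iff t0_def)
    show "((\<lambda>t. odds (G t)) \<longlongrightarrow> 0) at_top" using Delta_plusD(2)[OF assms(1)] by (rule tendsto_odds_0)
  qed (rule Gpos)
qed

lemma Delta_plus_less_1_if_regularly_varying:
  assumes "Delta_plus G" "regularly_varying \<rho> (\<lambda>t. one_minus_exp_inv (G t))" "0 \<le> T"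
  shows "G T < 1"
proof (rule ccontr)
  assume "\<not> G T < 1"
  then have G1: "G t = 1" if "T \<le> t" for t
    using monotone_onD[OF Delta_plusD(1)[OF assms(1)], of T t] Delta_plusD(4)[OF assms(1), of t] that assms(3)
    by auto
  have "\<forall>\<^sub>F t in at_top. one_minus_exp_inv (G (t * 2)) / one_minus_exp_inv (G t) = 0"
    using eventually_ge_at_top[of T] by eventually_elim (simp add: G1 one_minus_exp_inv_def)
  then have "((\<lambda>t. one_minus_exp_inv (G (t * 2)) / one_minus_exp_inv (G t)) \<longlongrightarrow> 0) at_top"
    by (rule tendsto_eventually)
  moreover have "((\<lambda>t. one_minus_exp_inv (G (t * 2)) / one_minus_exp_inv (G t)) \<longlongrightarrow> 2 powr \<rho>) at_top"
    using assms(2) unfolding regularly_varying_def by simp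
  ultimately have "2 powr \<rho> = (0::real)" using tendsto_unique[OF trivial_limit_at_top_linorder] by metis
  then show False by simp
qed

lemma LIMSEQ_0_if_eventually_times_less:
  fixes a :: "nat \<Rightarrow> real"
  assumes apos: "\<forall>n. 0 < a n" and "0 \<le> T"
    and less: "\<And>t. 0 < t \<Longrightarrow> \<forall>\<^sub>F n in sequentially. a n * t < T"
  shows "a \<longlonglongrightarrow> 0"
proof (rule order_tendstoI)
  fix b :: real
  assume "0 < b"
  then have "0 < (T + 1) / b" using \<open>0 \<le> T\<close> by simp
  from less[OF this] show "\<forall>\<^sub>F n in sequentially. a n < b"
  proof eventually_elim
    case (elim n)
    then have "a n * (T + 1) < b * (T + 1)" using \<open>0 < b\<close> by (simp add: field_simps)
    then show ?case using \<open>0 \<le> T\<close> mult_less_cancel_right[of "a n" "T + 1" b] by auto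
  qed
qed (use apos in \<open>auto intro: always_eventually less_trans\<close>)

(* If G T = 1, the points a n * t eventually stay below T for every t > 0, so a n \<longlonglongrightarrow> 0;
   right continuity at 0 then gives G 0 = 1, contradicting G (a n) < 1. *)
lemma Delta_plus_less_1_if_tendsto_1:
  assumes "Delta_plus G" and apos: "\<forall>n. 0 < a n"
    and below_1: "\<forall>t>0. \<forall>\<^sub>F n in sequentially. G (a n * t) < 1"
    and lim: "(\<lambda>n. G (a n)) \<longlonglongrightarrow> 1" and "0 \<le> T"
  shows "G T < 1"
proof (rule ccontr)
  note mono = monotone_onD[OF Delta_plusD(1)[OF assms(1)]]
  assume "\<not> G T < 1"
  then have GT: "G T = 1" using Delta_plusD(4)[OF assms(1) \<open>0 \<le> T\<close>] by simp
  have "\<forall>\<^sub>F n in sequentially. a n * t < T" if "0 < t" for t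
  proof -
    from below_1 that have "\<forall>\<^sub>F n in sequentially. G (a n * t) < 1" by blast
    then show ?thesis
    proof eventually_elim
      case (elim n)
      then show "a n * t < T" using mono[of T "a n * t"] GT \<open>0 \<le> T\<close> by force
    qed
  qed
  with apos \<open>0 \<le> T\<close> have "a \<longlonglongrightarrow> 0" by (rule LIMSEQ_0_if_eventually_times_less)
  then have "filterlim a (at_right 0) sequentially"
    using apos by (auto intro: tendsto_imp_filterlim_at_right)
  moreover have "(G \<longlongrightarrow> G 0) (at_right 0)"
    using Delta_plusD(5)[OF assms(1), of 0] by (simp add: continuous_within)
  ultimately have "(\<lambda>n. G (a n)) \<longlonglongrightarrow> G 0" by (rule filterlim_compose[rotated])
  with lim have G0: "G 0 = 1" by (rule LIMSEQ_unique[rotated])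
  have "\<forall>\<^sub>F n in sequentially. G (a n) < 1" using spec[OF below_1, of 1] by simp
  then have "\<forall>\<^sub>F n in sequentially. False"
  proof eventually_elim
    case (elim n)
    moreover have "0 \<le> a n" using apos by (simp add: less_imp_le)
    ultimately show False using mono[of 0 "a n"] G0 by simp
  qed
  then show False by simp
qed

lemma filterlim_at_top_if_tendsto_sup:
  fixes g :: "real \<Rightarrow> real"
  assumes mono: "mono_on {0..} g" and "\<forall>t\<ge>0. g t < c" "\<forall>n. 0 \<le> a n"
    and lim: "(\<lambda>n. g (a n)) \<longlonglongrightarrow> c"
  shows "filterlim a at_top sequentially"
  unfolding filterlim_at_top
proof
  fix Z :: real
  define M where "M = max Z 0"
  have "g M < c" using assms(2) by (simp add: M_def)
  from order_tendstoD(1)[OF lim this] show "\<forall>\<^sub>F n in sequentially. Z \<le> a n"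
  proof eventually_elim
    case (elim n)
    then have "\<not> a n \<le> M" using monotone_onD[OF mono, of "a n" M] assms(3) by (force simp: M_def)
    then show ?case by (simp add: M_def)
  qed
qed

lemma regularly_varying_if_bool_max_domain_of_attraction:
  assumes G: "Delta_plus G" and "bool_max_domain_of_attraction G F"
    and F: "\<forall>t>0. F t = 1 / (1 + t powr \<rho>)"
  shows "regularly_varying \<rho> (\<lambda>t. one_minus_exp_inv (G t))"
proof -
  obtain a where apos: "\<forall>n. 0 < a n" and conv: "\<forall>t\<ge>0. (\<lambda>n. bmax_pow n G (a n * t)) \<longlonglongrightarrow> F t"
    using assms(2) unfolding bool_max_domain_of_attraction_def by blast
  have "(\<lambda>n. real n * odds (G (a n * t))) \<longlonglongrightarrow> t powr \<rho> \<and>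
        (\<forall>\<^sub>F n in sequentially. G (a n * t) < 1)" if "0 < t" for t
  proof -
    have "\<forall>n. 0 \<le> G (a n * t) \<and> G (a n * t) \<le> 1"
      using Delta_plusD(3,4)[OF G] apos that by (simp add: less_imp_le)
    moreover have "(\<lambda>n. bmax_pow n G (a n * t)) \<longlonglongrightarrow> 1 / (1 + t powr \<rho>)"
      using conv[rule_format, of t] F[rule_format, OF that] that by simp
    ultimately show ?thesis using scaling_limit_if_bmax_pow_tendsto[of G "\<lambda>n. a n * t"] that by simp
  qed
  then have scaling: "\<forall>t>0. (\<lambda>n. real n * odds (G (a n * t))) \<longlonglongrightarrow> t powr \<rho>"
    and below_1: "\<forall>t>0. \<forall>\<^sub>F n in sequentially. G (a n * t) < 1"
    by blast+
  have "(\<lambda>n. real n * odds (G (a n * 1)) / real n) \<longlonglongrightarrow> 0"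
    using spec[OF scaling, of 1] filterlim_real_sequentially
    by (intro tendsto_divide_0[of _ 1] filterlim_at_top_imp_at_infinity) auto
  moreover have "\<forall>\<^sub>F n in sequentially. real n * odds (G (a n * 1)) / real n = odds (G (a n))"
    using eventually_gt_at_top[of 0] by eventually_elim simp
  ultimately have "(\<lambda>n. odds (G (a n))) \<longlonglongrightarrow> 0"
    by (rule Lim_transform_eventually)
  then have Ga: "(\<lambda>n. G (a n)) \<longlonglongrightarrow> 1"
    using tendsto_one_div_one_plus_iff[of 0 "\<lambda>n. odds (G (a n))"] by simp
  have lt1: "\<forall>t\<ge>0. G t < 1"
    using Delta_plus_less_1_if_tendsto_1[OF G apos below_1 Ga] by blast
  obtain t0 where "antimono_on {t0..} (\<lambda>t. odds (G t))" "\<forall>t\<ge>t0. 0 < odds (G t)"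
    using Delta_plus_odds[OF G lt1] by blast
  moreover have "filterlim a at_top sequentially"
    using filterlim_at_top_if_tendsto_sup[OF Delta_plusD(1)[OF G] lt1 _ Ga] apos less_imp_le by blast
  ultimately have "regularly_varying \<rho> (\<lambda>t. odds (G t))"
    using scaling by (rule regularly_varying_if_scaling_sequence)
  then show ?thesis
    using regularly_varying_asymp_equiv[OF one_minus_exp_inv_asymp_equiv_odds[OF Delta_plusD(2)[OF G]]]
    by simp
qed

lemma bool_max_domain_of_attraction_if_regularly_varying:
  assumes G: "Delta_plus G" and rv: "regularly_varying \<rho> (\<lambda>t. one_minus_exp_inv (G t))"
    and F: "\<forall>t>0. F t = 1 / (1 + t powr \<rho>)" "F 0 = 0"
  shows "bool_max_domain_of_attraction G F"
proof -
  have lt1: "\<forall>t\<ge>0. G t < 1" using Delta_plus_less_1_if_regularly_varying[OF G rv] by blast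
  obtain t0 where "0 < t0" and Gpos: "\<forall>t\<ge>t0. 0 < G t"
    and odds: "antimono_on {t0..} (\<lambda>t. odds (G t))" "\<forall>t\<ge>t0. 0 < odds (G t)"
      "((\<lambda>t. odds (G t)) \<longlongrightarrow> 0) at_top"
    using Delta_plus_odds[OF G lt1] by blast
  have "regularly_varying \<rho> (\<lambda>t. odds (G t))"
    using rv regularly_varying_asymp_equiv[OF one_minus_exp_inv_asymp_equiv_odds[OF Delta_plusD(2)[OF G]]]
    by simp
  then obtain a where apos: "\<forall>n. 0 < a n" and alim: "filterlim a at_top sequentially"
    and scaling: "\<forall>t>0. (\<lambda>n. real n * odds (G (a n * t))) \<longlonglongrightarrow> t powr \<rho>"
    using scaling_sequence_if_regularly_varying[OF odds(1,2) \<open>0 < t0\<close> odds(3)] by blast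
  have "(\<lambda>n. bmax_pow n G (a n * t)) \<longlonglongrightarrow> F t" if "0 \<le> t" for t
  proof (cases "t = 0")
    case True
    then show ?thesis using bmax_pow_tendsto_0[of G 0] lt1 Delta_plusD(3)[OF G] F(2) by simp
  next
    case False
    with that have "0 < t" by simp
    have "\<forall>\<^sub>F n in sequentially. 0 < G (a n * t) \<and> G (a n * t) \<le> 1"
      using eventually_ge_times_filterlim_at_top[OF alim \<open>0 < t\<close>, of t0]
      by eventually_elim (use Gpos Delta_plusD(4)[OF G] \<open>0 < t0\<close> in auto)
    then show ?thesis
      using tendsto_bmax_pow_iff[of G "\<lambda>n. a n * t" "t powr \<rho>"] scaling F \<open>0 < t\<close> by simp
  qed
  with apos show ?thesis unfolding bool_max_domain_of_attraction_def by blast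
qed

theorem corollary4p2:
  fixes \<alpha> :: real and F G :: "real \<Rightarrow> real"
  assumes "\<alpha> > 0"
    and "\<And>t. F t = (if t > 0 then 1 / (1 + t powr (- \<alpha>)) else 0)"
    and "Delta_plus G"
  shows "bool_max_domain_of_attraction G F \<longleftrightarrow>
         regularly_varying (- \<alpha>) (\<lambda>t. one_minus_exp_inv (G t))"
proof -
  have "\<forall>t>0. F t = 1 / (1 + t powr (- \<alpha>))" "F 0 = 0" using assms(2) by simp_all
  then show ?thesis
    using regularly_varying_if_bool_max_domain_of_attraction
      bool_max_domain_of_attraction_if_regularly_varying assms(3) by blast
qed

end
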